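(* Let $\mathcal T$ be an $n$-leaf tree with $n\ge 3$ and nonnegative edge weights, and let $v_{\mathcal T}$ be its tree game. - If all internal edge weights are zero, then the core of $(N,v_{\mathcal T})$ consists of the single vector $\vec\ell=(\alpha_1,\dots,\alpha_n)$ of leaf weights. - Otherwise (some internal edge has positive weight), the core is empty.
   Context: An $n$-leaf tree here is an unrooted tree whose leaves are labeled by $N=\{1,\dots,n\}$ and whose internal vertices all have degree 3. The edge incident to leaf $i$ is the leaf edge $i$, with weight $\alpha_i$. The remaining $n-3$ edges are internal edges. All edge weights are real numbers $\ge 0$. The tree game $v_{\mathcal T}$ assigns to each $S\subseteq N$ the sum of the weights of the edges of the minimal subtree spanning the leaves in $S$. In particular $v_{\mathcal T}(\emptyset)=0$ and $v_{\mathcal T}(\{i\})=0$. The core of a cooperative game $(N,v)$ is the set of vectors $x\in\mathbb R^n$ with $\sum_{i\in S}x_i\ge v(S)$ for all $S\subseteq N$ and $\sum_{i\in N}x_i=v(N)$. *)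

theory Defs
  imports Complex_Main
begin

definition adj :: "'v set set \<Rightarrow> 'v \<Rightarrow> 'v \<Rightarrow> bool" where
  "adj E u v \<longleftrightarrow> {u, v} \<in> E \<and> u \<noteq> v"

definition is_graph :: "'v set \<Rightarrow> 'v set set \<Rightarrow> bool" where
  "is_graph V E \<longleftrightarrow> finite V \<and> (\<forall>e\<in>E. \<exists>u v. e = {u, v} \<and> u \<noteq> v \<and> u \<in> V \<and> v \<in> V)"

definition connected_graph :: "'v set \<Rightarrow> 'v set set \<Rightarrow> bool" where
  "connected_graph V E \<longleftrightarrow>
     (\<forall>u\<in>V. \<forall>v\<in>V. (u, v) \<in> {(a, b). adj E a b}\<^sup>*)"

definition is_tree :: "'v set \<Rightarrow> 'v set set \<Rightarrow> bool" where
  "is_tree V E \<longleftrightarrow> is_graph V E \<and> V \<noteq> {} \<and> connected_graph V E \<and> card E + 1 = card V"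

definition degree :: "'v set set \<Rightarrow> 'v \<Rightarrow> nat" where
  "degree E v = card {e \<in> E. v \<in> e}"

definition n_leaf_tree :: "nat \<Rightarrow> 'v set \<Rightarrow> 'v set set \<Rightarrow> (nat \<Rightarrow> 'v) \<Rightarrow> bool" where
  "n_leaf_tree n V E lf \<longleftrightarrow> is_tree V E \<and> inj_on lf {1..n} \<and> lf ` {1..n} \<subseteq> V \<and>
     (\<forall>i\<in>{1..n}. degree E (lf i) = 1) \<and>
     (\<forall>v\<in>V - lf ` {1..n}. degree E v = 3)"

definition leaf_edge :: "'v set set \<Rightarrow> (nat \<Rightarrow> 'v) \<Rightarrow> nat \<Rightarrow> 'v set" where
  "leaf_edge E lf i = (THE e. e \<in> E \<and> lf i \<in> e)"

definition internal_edge :: "nat \<Rightarrow> 'v set set \<Rightarrow> (nat \<Rightarrow> 'v) \<Rightarrow> 'v set \<Rightarrow> bool" where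
  "internal_edge n E lf e \<longleftrightarrow> e \<in> E \<and> (\<forall>i\<in>{1..n}. lf i \<notin> e)"

definition leaf_weights :: "nat \<Rightarrow> 'v set set \<Rightarrow> (nat \<Rightarrow> 'v) \<Rightarrow> ('v set \<Rightarrow> real) \<Rightarrow> nat \<Rightarrow> real" where
  "leaf_weights n E lf w i = (if i \<in> {1..n} then w (leaf_edge E lf i) else 0)"

definition path_from_to :: "'v set set \<Rightarrow> 'v list \<Rightarrow> 'v \<Rightarrow> 'v \<Rightarrow> bool" where
  "path_from_to E p u v \<longleftrightarrow> p \<noteq> [] \<and> hd p = u \<and> last p = v \<and> distinct p \<and>
     (\<forall>k. Suc k < length p \<longrightarrow> adj E (p ! k) (p ! Suc k))"

definition path_edges :: "'v list \<Rightarrow> 'v set set" where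
  "path_edges p = {{p ! k, p ! Suc k} | k. Suc k < length p}"

text \<open>Edges of the minimal subtree spanning the leaves in S: the union of the
  paths between pairs of leaves of S.\<close>

definition spanning_edges :: "'v set set \<Rightarrow> (nat \<Rightarrow> 'v) \<Rightarrow> nat set \<Rightarrow> 'v set set" where
  "spanning_edges E lf S =
     {e \<in> E. \<exists>i\<in>S. \<exists>j\<in>S. \<exists>p. path_from_to E p (lf i) (lf j) \<and> e \<in> path_edges p}"

definition tree_game :: "'v set set \<Rightarrow> (nat \<Rightarrow> 'v) \<Rightarrow> ('v set \<Rightarrow> real) \<Rightarrow> nat set \<Rightarrow> real" where
  "tree_game E lf w S = sum w (spanning_edges E lf S)"

definition core :: "nat \<Rightarrow> (nat set \<Rightarrow> real) \<Rightarrow> (nat \<Rightarrow> real) set" where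
  "core n v = {x. (\<forall>i. i \<notin> {1..n} \<longrightarrow> x i = 0) \<and>
      (\<forall>S. S \<subseteq> {1..n} \<longrightarrow> sum x S \<ge> v S) \<and> sum x {1..n} = v {1..n}}"

end

theory Submission
  imports Defs
begin

text \<open>
  Fix a leaf i. Every edge not incident to leaf i lies on a path between two other leaves:
  extend a path through the edge, avoiding leaf i, as long as possible; an internal end vertex
  has three neighbours, and since a tree has no chords one of them allows a further step.
  Hence v(N) is the total weight, while v(N - {i}) misses at most the leaf edge of i, so
  every core vector x satisfies x_i \<le> \<alpha>_i. As \<Sum> x = v(N) = \<Sum> \<alpha> + (total internal weight),
  the core is empty as soon as an internal edge has positive weight. Otherwise x = \<alpha>, and
  \<alpha> does lie in the core: on a path between two leaves of S, a leaf edge can only be the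
  first or last edge, so the subtree spanned by S uses only leaf edges of S and internal edges.
\<close>

section \<open>Graphs and trees\<close>

lemma adj_commute: "adj E u v = adj E v u"
  unfolding adj_def by (auto simp: insert_commute)

lemma is_graph_finite_edges:
  assumes "is_graph V E"
  shows "finite E"
proof (rule finite_subset)
  show "E \<subseteq> Pow V" using assms unfolding is_graph_def by fastforce
  show "finite (Pow V)" using assms unfolding is_graph_def by simp
qed

lemma is_graph_edgeE:
  assumes "is_graph V E" "e \<in> E"
  obtains u v where "e = {u, v}" "adj E u v"
proof -
  from assms obtain u v where "e = {u, v}" "u \<noteq> v" unfolding is_graph_def by blast
  with assms(2) show thesis using that unfolding adj_def by blast
qed

lemma adj_in_vertices:
  assumes "is_graph V E" "adj E u v"
  shows "u \<in> V" "v \<in> V"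
proof -
  have "{u, v} \<in> E" using assms(2) unfolding adj_def by simp
  then obtain a b where "{u, v} = {a, b}" "a \<in> V" "b \<in> V"
    using assms(1) unfolding is_graph_def by blast
  then show "u \<in> V" "v \<in> V" by (auto simp: doubleton_eq_iff)
qed

lemma card_neighbours_eq_degree:
  assumes "is_graph V E"
  shows "card {v. adj E u v} = degree E u"
  unfolding degree_def
proof (rule bij_betw_same_card[of "\<lambda>v. {u, v}"], rule bij_betw_imageI)
  show "inj_on (\<lambda>v. {u, v}) {v. adj E u v}"
    by (auto intro!: inj_onI simp: doubleton_eq_iff)
  show "(\<lambda>v. {u, v}) ` {v. adj E u v} = {e \<in> E. u \<in> e}"
  proof (intro equalityI subsetI)
    fix e assume "e \<in> {e \<in> E. u \<in> e}"
    then obtain a b where "e = {a, b}" "adj E a b" "u \<in> e"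
      using assms by (blast elim: is_graph_edgeE)
    then show "e \<in> (\<lambda>v. {u, v}) ` {v. adj E u v}"
      by (auto simp: adj_commute insert_commute)
  qed (auto simp: adj_def)
qed

text \<open>A spanning tree argument: every vertex other than a root r has a neighbour strictly
  closer to r, and sending each vertex to the edge towards that neighbour is injective.\<close>
lemma connected_graph_card_le:
  assumes g: "is_graph V E" and c: "connected_graph V E" and r: "r \<in> V"
  shows "card V \<le> card E + 1"
proof -
  let ?R = "{(a, b). adj E a b}"
  define d where "d v = (LEAST k. (v, r) \<in> ?R ^^ k)" for v
  have reach: "(v, r) \<in> ?R ^^ d v" if "v \<in> V" for v
  proof -
    have "\<exists>k. (v, r) \<in> ?R ^^ k"
      using c r that unfolding connected_graph_def by (simp add: rtrancl_power)
    then show ?thesis unfolding d_def by (rule LeastI_ex)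
  qed
  have closer: "\<exists>u. adj E v u \<and> d u < d v" if "v \<in> V" "v \<noteq> r" for v
  proof -
    have "d v \<noteq> 0" using reach[of v] that by (metis relpow_0_E)
    then obtain m where m: "d v = Suc m" by (cases "d v") auto
    then obtain u where "(v, u) \<in> ?R" "(u, r) \<in> ?R ^^ m"
      using reach[OF \<open>v \<in> V\<close>] by (metis relpow_Suc_D2)
    moreover from this(2) have "d u \<le> m" unfolding d_def by (rule Least_le)
    ultimately show ?thesis using m by auto
  qed
  define p where "p v = (SOME u. adj E v u \<and> d u < d v)" for v
  have p: "adj E v (p v) \<and> d (p v) < d v" if "v \<in> V" "v \<noteq> r" for v
    unfolding p_def using closer[OF that] by (rule someI_ex)
  have "inj_on (\<lambda>v. {v, p v}) (V - {r})"
  proof (rule inj_onI, rule ccontr)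
    fix x y assume x: "x \<in> V - {r}" and y: "y \<in> V - {r}"
      and "{x, p x} = {y, p y}" and "x \<noteq> y"
    then have "x = p y" "p x = y" by (auto simp: doubleton_eq_iff)
    then show False using p[of x] p[of y] x y by auto
  qed
  moreover have "(\<lambda>v. {v, p v}) ` (V - {r}) \<subseteq> E"
    using p unfolding adj_def by auto
  ultimately have "card (V - {r}) \<le> card E"
    using is_graph_finite_edges[OF g] by (rule card_inj_on_le)
  moreover have "finite V" using g unfolding is_graph_def by simp
  ultimately show ?thesis using r by (simp add: card_Diff_singleton)
qed

lemma connected_graph_remove_cycle_edge:
  assumes c: "connected_graph V E"
    and cycle: "(a, b) \<in> {(x, y). adj (E - {{a, b}}) x y}\<^sup>*"
  shows "connected_graph V (E - {{a, b}})"
proof -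
  let ?R' = "{(x, y). adj (E - {{a, b}}) x y}"
  have "sym ?R'" by (auto intro: symI simp: adj_commute)
  then have reverse: "(b, a) \<in> ?R'\<^sup>*" using cycle by (meson sym_rtrancl symD)
  have "{(x, y). adj E x y} \<subseteq> ?R'\<^sup>*"
  proof safe
    fix x y assume xy: "adj E x y"
    show "(x, y) \<in> ?R'\<^sup>*"
    proof (cases "{x, y} = {a, b}")
      case True
      then have "(x = a \<and> y = b) \<or> (x = b \<and> y = a)" by (simp add: doubleton_eq_iff)
      then show ?thesis using cycle reverse by blast
    next
      case False
      then have "(x, y) \<in> ?R'" using xy unfolding adj_def by simp
      then show ?thesis by (rule r_into_rtrancl)
    qed
  qed
  then have "{(x, y). adj E x y}\<^sup>* \<subseteq> ?R'\<^sup>*"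
    by (metis rtrancl_subset_rtrancl)
  then show ?thesis using c unfolding connected_graph_def by blast
qed

lemma tree_remove_edge_disconnected:
  assumes t: "is_tree V E" and e: "e \<in> E"
  shows "\<not> connected_graph V (E - {e})"
proof
  assume c: "connected_graph V (E - {e})"
  have g: "is_graph V E" and "V \<noteq> {}" and card: "card E + 1 = card V"
    using t unfolding is_tree_def by auto
  then obtain r where "r \<in> V" by blast
  have "is_graph V (E - {e})" using g unfolding is_graph_def by blast
  from connected_graph_card_le[OF this c \<open>r \<in> V\<close>]
  have "card V \<le> card (E - {e}) + 1" .
  moreover have "card (E - {e}) + 1 = card E"
    using card_Suc_Diff1[OF is_graph_finite_edges[OF g] e] by simp
  ultimately show False using card by linarith
qed

section \<open>Simple paths\<close>

definition simple_path :: "'v set set \<Rightarrow> 'v list \<Rightarrow> bool" where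
  "simple_path E p \<longleftrightarrow> distinct p \<and> (\<forall>k. Suc k < length p \<longrightarrow> adj E (p ! k) (p ! Suc k))"

lemma path_from_to_iff_simple_path:
  "path_from_to E p u v \<longleftrightarrow> p \<noteq> [] \<and> hd p = u \<and> last p = v \<and> simple_path E p"
  unfolding path_from_to_def simple_path_def by auto

lemma simple_path_rev:
  assumes "simple_path E p"
  shows "simple_path E (rev p)"
  unfolding simple_path_def
proof (intro conjI allI impI)
  show "distinct (rev p)" using assms unfolding simple_path_def by simp
  fix k assume k: "Suc k < length (rev p)"
  define k' where "k' = length p - Suc (Suc k)"
  have "rev p ! k = p ! Suc k'" "rev p ! Suc k = p ! k'" "Suc k' < length p"
    using k unfolding k'_def by (auto simp: rev_nth Suc_diff_Suc)
  then show "adj E (rev p ! k) (rev p ! Suc k)"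
    using assms unfolding simple_path_def by (simp add: adj_commute)
qed

lemma path_edges_rev: "path_edges (rev p) = path_edges p"
proof -
  have "path_edges (rev q) \<subseteq> path_edges q" for q :: "'a list"
  proof
    fix e assume "e \<in> path_edges (rev q)"
    then obtain k where e: "e = {rev q ! k, rev q ! Suc k}" "Suc k < length q"
      unfolding path_edges_def by auto
    define k' where "k' = length q - Suc (Suc k)"
    have "e = {q ! k', q ! Suc k'}" "Suc k' < length q"
      using e unfolding k'_def by (auto simp: rev_nth Suc_diff_Suc)
    then show "e \<in> path_edges q" unfolding path_edges_def by blast
  qed
  from this[of p] this[of "rev p"] show ?thesis by auto
qed

lemma path_edges_append: "path_edges p \<subseteq> path_edges (p @ q)"
  unfolding path_edges_def by (force simp: nth_append)

lemma path_edge_subset_set: "e \<in> path_edges p \<Longrightarrow> e \<subseteq> set p"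
  unfolding path_edges_def by auto

lemma length_ge_2_if_path_edge: "e \<in> path_edges p \<Longrightarrow> 2 \<le> length p"
  unfolding path_edges_def by auto

lemma simple_path_snoc:
  assumes "simple_path E p" "p \<noteq> []" "adj E (last p) c" "c \<notin> set p"
  shows "simple_path E (p @ [c])"
  unfolding simple_path_def
proof (intro conjI allI impI)
  show "distinct (p @ [c])" using assms unfolding simple_path_def by simp
  fix k assume k: "Suc k < length (p @ [c])"
  show "adj E ((p @ [c]) ! k) ((p @ [c]) ! Suc k)"
  proof (cases "Suc k < length p")
    case True
    then show ?thesis using assms(1) unfolding simple_path_def by (simp add: nth_append)
  next
    case False
    then have "k = length p - 1" using k by simp
    then show ?thesis using assms(2,3) by (simp add: nth_append last_conv_nth)
  qed
qed

lemma set_simple_path_subset: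
  assumes g: "is_graph V E" and p: "simple_path E p" and len: "2 \<le> length p"
  shows "set p \<subseteq> V"
proof
  fix x assume "x \<in> set p"
  then obtain t where t: "t < length p" "p ! t = x" by (auto simp: in_set_conv_nth)
  show "x \<in> V"
  proof (cases "Suc t < length p")
    case True
    then show ?thesis using p t adj_in_vertices(1)[OF g] unfolding simple_path_def by blast
  next
    case False
    then have "t = Suc (t - 1)" "Suc (t - 1) < length p" using len t by auto
    then have "adj E (p ! (t - 1)) (p ! t)" using p unfolding simple_path_def by metis
    then show ?thesis using t adj_in_vertices(2)[OF g] by blast
  qed
qed

lemma length_simple_path_le_card:
  assumes g: "is_graph V E" and p: "simple_path E p" and len: "2 \<le> length p"
  shows "length p \<le> card V"
proof -
  have "card (set p) \<le> card V"
    using set_simple_path_subset[OF assms] g unfolding is_graph_def by (simp add: card_mono)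
  then show ?thesis using p unfolding simple_path_def by (simp add: distinct_card)
qed

lemma simple_path_pair: "adj E a b \<Longrightarrow> simple_path E [a, b]"
  unfolding simple_path_def adj_def by (simp add: less_Suc_eq)

lemma pair_in_path_edges: "{a, b} \<in> path_edges [a, b]"
  unfolding path_edges_def by (auto intro!: exI[of _ 0])

lemma nth_chain_in_rtrancl:
  assumes "\<And>k. j \<le> k \<Longrightarrow> Suc k \<le> m \<Longrightarrow> (p ! k, p ! Suc k) \<in> R" "j \<le> m"
  shows "(p ! j, p ! m) \<in> R\<^sup>*"
  using assms
proof (induction m)
  case 0
  then show ?case by simp
next
  case (Suc m)
  show ?case
  proof (cases "j = Suc m")
    case False
    then have "(p ! j, p ! m) \<in> R\<^sup>*" and "(p ! m, p ! Suc m) \<in> R" using Suc by auto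
    then show ?thesis by (rule rtrancl_into_rtrancl)
  qed simp
qed

text \<open>A chord would close a cycle, and deleting an edge of a cycle keeps a graph connected.\<close>
lemma tree_simple_path_no_chord:
  assumes t: "is_tree V E" and p: "simple_path E p" and jm: "j + 2 \<le> m" "m < length p"
  shows "\<not> adj E (p ! m) (p ! j)"
proof
  assume chord: "adj E (p ! m) (p ! j)"
  let ?e = "{p ! j, p ! m}"
  have distinct_p: "distinct p" using p unfolding simple_path_def by simp
  have "(p ! j, p ! m) \<in> {(x, y). adj (E - {?e}) x y}\<^sup>*"
  proof (rule nth_chain_in_rtrancl)
    fix k assume k: "j \<le> k" "Suc k \<le> m"
    then have "p ! k = p ! j \<longleftrightarrow> k = j" "p ! Suc k = p ! m \<longleftrightarrow> Suc k = m" "p ! k \<noteq> p ! m"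
      using distinct_p jm by (simp_all add: nth_eq_iff_index_eq)
    then have "{p ! k, p ! Suc k} \<noteq> ?e" using jm by (auto simp: doubleton_eq_iff)
    moreover have "adj E (p ! k) (p ! Suc k)" using p k jm unfolding simple_path_def by simp
    ultimately show "(p ! k, p ! Suc k) \<in> {(x, y). adj (E - {?e}) x y}"
      unfolding adj_def by simp
  qed (use jm in simp)
  moreover have "connected_graph V E" using t unfolding is_tree_def by simp
  ultimately have "connected_graph V (E - {?e})" by (rule connected_graph_remove_cycle_edge[rotated])
  moreover have "?e \<in> E" using chord unfolding adj_def by (simp add: insert_commute)
  ultimately show False using tree_remove_edge_disconnected[OF t] by blast
qed

lemma degree_one_on_simple_path:
  assumes deg: "degree E x = 1" and p: "simple_path E p" and x: "x \<in> set p"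
  shows "x = hd p \<or> x = last p"
proof (rule ccontr)
  assume inner: "\<not> (x = hd p \<or> x = last p)"
  obtain t where t: "t < length p" "p ! t = x" using x by (auto simp: in_set_conv_nth)
  have "p \<noteq> []" using x by auto
  have "t \<noteq> 0"
  proof
    assume "t = 0"
    then have "x = hd p" using t \<open>p \<noteq> []\<close> by (simp add: hd_conv_nth)
    then show False using inner by simp
  qed
  moreover have "Suc t \<noteq> length p"
  proof
    assume "Suc t = length p"
    then have "t = length p - 1" by simp
    then have "x = last p" using t \<open>p \<noteq> []\<close> by (simp add: last_conv_nth)
    then show False using inner by simp
  qed
  ultimately have t': "t = Suc (t - 1)" "Suc t < length p" using t by auto
  have distinct_p: "distinct p" and steps: "\<And>k. Suc k < length p \<Longrightarrow> adj E (p ! k) (p ! Suc k)"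
    using p unfolding simple_path_def by simp_all
  have adj_pred: "adj E (p ! (t - 1)) x"
    using steps[of "t - 1"] t t' by simp
  have adj_succ: "adj E x (p ! Suc t)"
    using steps[OF t'(2)] t by simp
  obtain e where single: "{e \<in> E. x \<in> e} = {e}"
    using deg unfolding degree_def by (rule card_1_singletonE)
  have "{p ! (t - 1), x} \<in> {e \<in> E. x \<in> e}" "{x, p ! Suc t} \<in> {e \<in> E. x \<in> e}"
    using adj_pred adj_succ unfolding adj_def by simp_all
  then have "{p ! (t - 1), x} = {x, p ! Suc t}" unfolding single by simp
  then have "p ! (t - 1) = p ! Suc t"
    using adj_pred unfolding adj_def by (auto simp: doubleton_eq_iff)
  then show False using distinct_p t' by (simp add: nth_eq_iff_index_eq)
qed

section \<open>Cores of cooperative games\<close>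

lemma core_le_marginal_contribution:
  assumes x: "x \<in> core n v" and i: "i \<in> {1..n}"
  shows "x i \<le> v {1..n} - v ({1..n} - {i})"
proof -
  have "v ({1..n} - {i}) \<le> sum x ({1..n} - {i})" and "sum x {1..n} = v {1..n}"
    using x unfolding core_def by blast+
  moreover have "sum x ({1..n} - {i}) = sum x {1..n} - x i" using i by (simp add: sum_diff1)
  ultimately show ?thesis by linarith
qed

lemma core_eq_singletonI:
  assumes a: "a \<in> core n v" and bounded: "\<And>x i. x \<in> core n v \<Longrightarrow> i \<in> {1..n} \<Longrightarrow> x i \<le> a i"
  shows "core n v = {a}"
proof (intro equalityI subsetI)
  fix x assume x: "x \<in> core n v"
  have "sum x {1..n} = v {1..n}" "sum a {1..n} = v {1..n}"
    and "\<forall>i. i \<notin> {1..n} \<longrightarrow> x i = 0" "\<forall>i. i \<notin> {1..n} \<longrightarrow> a i = 0"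
    using x a unfolding core_def by blast+
  moreover have "x i = a i" if "i \<in> {1..n}" "sum x {1..n} = sum a {1..n}" for i
    using that(2) bounded[OF x] that(1) by (rule sum_mono_inv) auto
  ultimately have "x i = a i" for i by (cases "i \<in> {1..n}") simp_all
  then show "x \<in> {a}" by auto
qed (use a in simp)

lemma core_empty_if_sum_less:
  assumes less: "sum a {1..n} < v {1..n}"
    and bounded: "\<And>x i. x \<in> core n v \<Longrightarrow> i \<in> {1..n} \<Longrightarrow> x i \<le> a i"
  shows "core n v = {}"
proof (rule ccontr)
  assume "core n v \<noteq> {}"
  then obtain x where x: "x \<in> core n v" by blast
  then have "sum x {1..n} = v {1..n}" unfolding core_def by blast
  moreover have "sum x {1..n} \<le> sum a {1..n}" using bounded[OF x] by (rule sum_mono)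
  ultimately show False using less by linarith
qed

section \<open>Leaf-labelled trees and their tree games\<close>

lemma spanning_edges_subset: "spanning_edges E lf S \<subseteq> E"
  unfolding spanning_edges_def by blast

lemma spanning_edges_mono: "S \<subseteq> T \<Longrightarrow> spanning_edges E lf S \<subseteq> spanning_edges E lf T"
  unfolding spanning_edges_def by blast

locale leaf_tree =
  fixes n :: nat and V :: "'v set" and E :: "'v set set" and lf :: "nat \<Rightarrow> 'v"
  assumes n_leaf_tree: "n_leaf_tree n V E lf"
begin

lemma is_tree: "is_tree V E"
  and is_graph: "is_graph V E"
  and inj_leaf: "inj_on lf {1..n}"
  and leaf_in_V: "lf ` {1..n} \<subseteq> V"
  and degree_leaf: "i \<in> {1..n} \<Longrightarrow> degree E (lf i) = 1"
  and degree_internal: "v \<in> V - lf ` {1..n} \<Longrightarrow> degree E v = 3"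
  using n_leaf_tree unfolding n_leaf_tree_def is_tree_def by auto

lemma finite_edges: "finite E"
  using is_graph by (rule is_graph_finite_edges)

lemma leaf_edge:
  assumes "k \<in> {1..n}"
  shows leaf_edge_in_edges: "leaf_edge E lf k \<in> E"
    and leaf_in_leaf_edge: "lf k \<in> leaf_edge E lf k"
    and leaf_edge_unique: "\<And>e. e \<in> E \<Longrightarrow> lf k \<in> e \<Longrightarrow> e = leaf_edge E lf k"
proof -
  obtain e where e: "{e \<in> E. lf k \<in> e} = {e}"
    using degree_leaf[OF assms] unfolding degree_def by (rule card_1_singletonE)
  moreover from e have "leaf_edge E lf k = e"
    unfolding leaf_edge_def by (intro the_equality) auto
  ultimately show "leaf_edge E lf k \<in> E" "lf k \<in> leaf_edge E lf k"
    "\<And>e. e \<in> E \<Longrightarrow> lf k \<in> e \<Longrightarrow> e = leaf_edge E lf k"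
    by auto
qed

text \<open>At an internal endpoint of a simple path, the predecessor and one forbidden vertex
  use up at most two of the three neighbours; the third one cannot lie on the path,
  as a tree has no chords.\<close>
lemma simple_path_extensible:
  assumes p: "simple_path E p" and len: "2 \<le> length p" and internal: "last p \<notin> lf ` {1..n}"
  obtains c where "adj E (last p) c" "c \<notin> set p" "c \<noteq> x"
proof -
  define m where "m = length p - 1"
  have m: "m < length p" using len unfolding m_def by auto
  have "p \<noteq> []" using len by auto
  then have last: "last p = p ! m" unfolding m_def by (rule last_conv_nth)
  have "last p \<in> V"
    using set_simple_path_subset[OF is_graph p len] \<open>p \<noteq> []\<close> by auto
  then have "card {c. adj E (last p) c} = 3"
    using internal degree_internal card_neighbours_eq_degree[OF is_graph] by simp
  moreover have "card {p ! (m - 1), x} \<le> 2" by (simp add: card_insert_if)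
  ultimately have "card {c. adj E (last p) c} - card {p ! (m - 1), x} > 0" by linarith
  also have "\<dots> \<le> card ({c. adj E (last p) c} - {p ! (m - 1), x})"
    by (rule diff_card_le_card_Diff) simp
  finally have "{c. adj E (last p) c} - {p ! (m - 1), x} \<noteq> {}" by (metis card.empty less_irrefl)
  then obtain c where c: "adj E (p ! m) c" "c \<noteq> p ! (m - 1)" "c \<noteq> x"
    unfolding last by blast
  have "c \<notin> set p"
  proof
    assume "c \<in> set p"
    then obtain j where j: "j < length p" "p ! j = c" by (auto simp: in_set_conv_nth)
    have "j \<noteq> m" using c(1) j unfolding adj_def by auto
    moreover have "j \<noteq> m - 1" using c(2) j by auto
    ultimately have "j + 2 \<le> m" using j unfolding m_def by linarith
    with c(1) j show False using tree_simple_path_no_chord[OF is_tree p _ m] by blast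
  qed
  with c that show thesis unfolding last by blast
qed

lemma longest_path_avoiding_leaf_ends_at_leaf:
  assumes q: "simple_path E q" "lf i \<notin> set q" "e \<in> path_edges q"
    and longest: "\<And>q'. simple_path E q' \<Longrightarrow> lf i \<notin> set q' \<Longrightarrow> e \<in> path_edges q'
      \<Longrightarrow> length q' \<le> length q"
  shows "last q \<in> lf ` ({1..n} - {i})"
proof (rule ccontr)
  assume not_leaf: "last q \<notin> lf ` ({1..n} - {i})"
  from q(3) have len: "2 \<le> length q" by (rule length_ge_2_if_path_edge)
  then have "q \<noteq> []" by auto
  then have "last q \<noteq> lf i" using q(2) last_in_set by metis
  with not_leaf have "last q \<notin> lf ` {1..n}" by blast
  then obtain c where c: "adj E (last q) c" "c \<notin> set q" "c \<noteq> lf i"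
    using simple_path_extensible[OF q(1) len] by metis
  have "simple_path E (q @ [c])" using simple_path_snoc[OF q(1) \<open>q \<noteq> []\<close> c(1,2)] .
  moreover have "lf i \<notin> set (q @ [c])" using q(2) c(3) by simp
  moreover have "e \<in> path_edges (q @ [c])" using q(3) path_edges_append by blast
  ultimately have "length (q @ [c]) \<le> length q" by (rule longest)
  then show False by simp
qed

lemma edge_in_spanning_edges_without_leaf:
  assumes e: "e \<in> E" and avoid: "lf i \<notin> e"
  shows "e \<in> spanning_edges E lf ({1..n} - {i})"
proof -
  define P where "P q \<longleftrightarrow> simple_path E q \<and> lf i \<notin> set q \<and> e \<in> path_edges q" for q
  obtain a b where ab: "e = {a, b}" "adj E a b" using is_graph_edgeE[OF is_graph e] .
  then have "P [a, b]"
    using avoid simple_path_pair pair_in_path_edges unfolding P_def by auto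
  moreover have "length q < card V + 1" if "P q" for q
  proof -
    have "simple_path E q" "e \<in> path_edges q" using that unfolding P_def by simp_all
    then have "length q \<le> card V"
      using length_ge_2_if_path_edge length_simple_path_le_card[OF is_graph] by blast
    then show ?thesis by simp
  qed
  ultimately obtain p where p: "P p" and longest: "\<And>q. P q \<Longrightarrow> length q \<le> length p"
    using ex_has_greatest_nat[of P "[a, b]" length "card V + 1"] by blast
  have "P (rev p)" using p unfolding P_def by (simp add: simple_path_rev path_edges_rev)
  then have "last (rev p) \<in> lf ` ({1..n} - {i})"
    using longest unfolding P_def by (intro longest_path_avoiding_leaf_ends_at_leaf) auto
  moreover have "p \<noteq> []" using p length_ge_2_if_path_edge unfolding P_def by fastforce
  ultimately have "hd p \<in> lf ` ({1..n} - {i})" by (simp add: last_rev)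
  then obtain j where j: "j \<in> {1..n} - {i}" "hd p = lf j" by blast
  have "last p \<in> lf ` ({1..n} - {i})"
    using p longest unfolding P_def by (intro longest_path_avoiding_leaf_ends_at_leaf) auto
  then obtain k where k: "k \<in> {1..n} - {i}" "last p = lf k" by blast
  have "path_from_to E p (lf j) (lf k)"
    using p j(2) k(2) \<open>p \<noteq> []\<close> unfolding P_def path_from_to_iff_simple_path by simp
  then show ?thesis using p e j(1) k(1) unfolding spanning_edges_def P_def by blast
qed

text \<open>Otherwise the two leaves a and b, joined by their common leaf edge, would form a
  connected component.\<close>
lemma inj_on_leaf_edge:
  assumes "3 \<le> n"
  shows "inj_on (leaf_edge E lf) {1..n}"
proof (rule inj_onI, rule ccontr)
  fix a b
  assume a: "a \<in> {1..n}" and b: "b \<in> {1..n}" and eq: "leaf_edge E lf a = leaf_edge E lf b"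
    and "a \<noteq> b"
  have "\<not> {1..n} \<subseteq> {a, b}"
  proof
    assume "{1..n} \<subseteq> {a, b}"
    then have "card {1..n} \<le> card {a, b}" by (rule card_mono[rotated]) simp
    then show False using assms by (simp add: card_insert_if split: if_splits)
  qed
  then obtain c where c: "c \<in> {1..n}" "c \<noteq> a" "c \<noteq> b" by blast
  have "lf a \<noteq> lf b" using inj_leaf a b \<open>a \<noteq> b\<close> by (auto dest: inj_onD)
  moreover obtain u v where "leaf_edge E lf a = {u, v}"
    using is_graph_edgeE[OF is_graph leaf_edge_in_edges[OF a]] by metis
  ultimately have ab: "leaf_edge E lf a = {lf a, lf b}"
    using leaf_in_leaf_edge[OF a] leaf_in_leaf_edge[OF b] eq by auto
  have closed: "z \<in> {lf a, lf b}" if "y \<in> {lf a, lf b}" "adj E y z" for y z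
  proof -
    have "{y, z} \<in> E" using that(2) unfolding adj_def by simp
    then have "{y, z} = leaf_edge E lf a"
      using that(1) leaf_edge_unique[OF a] leaf_edge_unique[OF b] eq by auto
    then show ?thesis using ab by auto
  qed
  have "(lf a, lf c) \<in> {(x, y). adj E x y}\<^sup>*"
    using is_tree leaf_in_V a c unfolding is_tree_def connected_graph_def by blast
  then have "lf c \<in> {lf a, lf b}"
  proof (induction rule: rtrancl_induct)
    case (step y z)
    then show ?case using closed by blast
  qed simp
  then show False using a b c inj_leaf by (auto dest: inj_onD)
qed

lemma spanning_edges_all_leaves:
  assumes "3 \<le> n"
  shows "spanning_edges E lf {1..n} = E"
proof (rule equalityI[OF spanning_edges_subset], rule subsetI)
  fix e assume e: "e \<in> E"
  obtain u v where "e = {u, v}" using is_graph_edgeE[OF is_graph e] by metis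
  have "\<not> lf ` {1..n} \<subseteq> e"
  proof
    assume "lf ` {1..n} \<subseteq> e"
    then have "card (lf ` {1..n}) \<le> card e" using \<open>e = {u, v}\<close> by (simp add: card_mono)
    also have "\<dots> \<le> 2" using \<open>e = {u, v}\<close> by (simp add: card_insert_if)
    finally show False using assms card_image[OF inj_leaf] by simp
  qed
  then obtain i where "i \<in> {1..n}" "lf i \<notin> e" by blast
  then have "e \<in> spanning_edges E lf ({1..n} - {i})"
    using e by (intro edge_in_spanning_edges_without_leaf)
  then show "e \<in> spanning_edges E lf {1..n}"
    using spanning_edges_mono[of "{1..n} - {i}" "{1..n}"] by blast
qed

lemma finite_internal_edges: "finite {e. internal_edge n E lf e}"
  using finite_edges by (rule finite_subset[rotated]) (auto simp: internal_edge_def)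

lemma internal_edges_eq: "{e. internal_edge n E lf e} = E - leaf_edge E lf ` {1..n}"
  unfolding internal_edge_def using leaf_edge_unique leaf_in_leaf_edge by blast

lemma spanning_edges_subset_leaf_or_internal:
  assumes S: "S \<subseteq> {1..n}"
  shows "spanning_edges E lf S \<subseteq> leaf_edge E lf ` S \<union> {e. internal_edge n E lf e}"
proof
  fix e assume "e \<in> spanning_edges E lf S"
  then obtain a b p where ab: "a \<in> S" "b \<in> S" and p: "path_from_to E p (lf a) (lf b)"
    and "e \<in> path_edges p" and "e \<in> E"
    unfolding spanning_edges_def by blast
  show "e \<in> leaf_edge E lf ` S \<union> {e. internal_edge n E lf e}"
  proof (cases "internal_edge n E lf e")
    case False
    then obtain k where k: "k \<in> {1..n}" "lf k \<in> e"
      using \<open>e \<in> E\<close> unfolding internal_edge_def by blast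
    then have "lf k \<in> set p" using path_edge_subset_set \<open>e \<in> path_edges p\<close> by blast
    moreover have "simple_path E p" "hd p = lf a" "last p = lf b"
      using p unfolding path_from_to_iff_simple_path by auto
    ultimately have "lf k = lf a \<or> lf k = lf b"
      using degree_one_on_simple_path[OF degree_leaf[OF k(1)]] by metis
    then have "k \<in> S" using ab S k(1) inj_leaf by (auto dest: inj_onD)
    moreover have "e = leaf_edge E lf k" using leaf_edge_unique k \<open>e \<in> E\<close> by blast
    ultimately show ?thesis by blast
  qed simp
qed

lemma tree_game_all_leaves:
  assumes "3 \<le> n"
  shows "tree_game E lf w {1..n}
    = sum (leaf_weights n E lf w) {1..n} + sum w {e. internal_edge n E lf e}"
proof -
  have "tree_game E lf w {1..n} = sum w E"
    unfolding tree_game_def spanning_edges_all_leaves[OF assms] ..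
  also have "\<dots> = sum w (E - leaf_edge E lf ` {1..n}) + sum w (leaf_edge E lf ` {1..n})"
    using finite_edges leaf_edge_in_edges by (intro sum.subset_diff) auto
  also have "sum w (leaf_edge E lf ` {1..n}) = sum (leaf_weights n E lf w) {1..n}"
    using sum.reindex[OF inj_on_leaf_edge[OF assms], of w] by (simp add: leaf_weights_def)
  finally show ?thesis by (simp add: internal_edges_eq)
qed

lemma tree_game_marginal_le_leaf_weight:
  assumes w: "\<forall>e\<in>E. 0 \<le> w e" and i: "i \<in> {1..n}"
  shows "tree_game E lf w {1..n} - tree_game E lf w ({1..n} - {i}) \<le> leaf_weights n E lf w i"
proof -
  have finite_spanning: "finite (spanning_edges E lf S)" for S
    using finite_edges spanning_edges_subset by (rule finite_subset[rotated])
  have "tree_game E lf w {1..n} \<le> sum w E"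
    unfolding tree_game_def using finite_edges spanning_edges_subset w by (intro sum_mono2) auto
  moreover have "sum w (E - {leaf_edge E lf i}) \<le> tree_game E lf w ({1..n} - {i})"
    unfolding tree_game_def
  proof (rule sum_mono2[OF finite_spanning])
    show "E - {leaf_edge E lf i} \<subseteq> spanning_edges E lf ({1..n} - {i})"
      using edge_in_spanning_edges_without_leaf leaf_edge_unique[OF i] by blast
  qed (use w spanning_edges_subset in blast)
  moreover have "sum w (E - {leaf_edge E lf i}) = sum w E - w (leaf_edge E lf i)"
    using finite_edges leaf_edge_in_edges[OF i] by (simp add: sum_diff1)
  ultimately show ?thesis using i by (simp add: leaf_weights_def)
qed

lemma tree_game_le_leaf_weights:
  assumes w: "\<forall>e\<in>E. 0 \<le> w e" and S: "S \<subseteq> {1..n}"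
  shows "tree_game E lf w S \<le> sum (leaf_weights n E lf w) S + sum w {e. internal_edge n E lf e}"
proof -
  let ?L = "leaf_edge E lf ` S" and ?I = "{e. internal_edge n E lf e}"
  have "finite S" using S finite_subset by blast
  have "?L \<subseteq> E" "?I \<subseteq> E" using S leaf_edge_in_edges unfolding internal_edge_def by auto
  have "finite ?L" using \<open>finite S\<close> by simp
  have "tree_game E lf w S \<le> sum w (?L \<union> ?I)"
    unfolding tree_game_def
    using spanning_edges_subset_leaf_or_internal[OF S] \<open>?L \<subseteq> E\<close> \<open>?I \<subseteq> E\<close> w
      \<open>finite ?L\<close> finite_internal_edges
    by (intro sum_mono2) auto
  also have "\<dots> = sum w ?L + sum w ?I"
    using \<open>finite ?L\<close> finite_internal_edges S
    by (intro sum.union_disjoint) (auto simp: internal_edges_eq)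
  also have "sum w ?L \<le> sum (w \<circ> leaf_edge E lf) S"
    using \<open>finite S\<close> \<open>?L \<subseteq> E\<close> w by (intro sum_image_le) auto
  also have "\<dots> = sum (leaf_weights n E lf w) S"
    using S by (intro sum.cong) (auto simp: leaf_weights_def)
  finally show ?thesis by simp
qed

lemma leaf_weights_in_core:
  assumes "3 \<le> n" "\<forall>e\<in>E. 0 \<le> w e" and internal: "\<forall>e. internal_edge n E lf e \<longrightarrow> w e = 0"
  shows "leaf_weights n E lf w \<in> core n (tree_game E lf w)"
proof -
  have zero: "sum w {e. internal_edge n E lf e} = 0" using internal by simp
  show ?thesis
    unfolding core_def
  proof (intro CollectI conjI allI impI)
    show "leaf_weights n E lf w i = 0" if "i \<notin> {1..n}" for i
      using that unfolding leaf_weights_def by auto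
    show "tree_game E lf w S \<le> sum (leaf_weights n E lf w) S" if "S \<subseteq> {1..n}" for S
      using tree_game_le_leaf_weights[OF assms(2) that] zero by simp
    show "sum (leaf_weights n E lf w) {1..n} = tree_game E lf w {1..n}"
      using tree_game_all_leaves[OF assms(1)] zero by simp
  qed
qed

end

theorem theorem12:
  fixes n :: nat and V :: "'v set" and E :: "'v set set" and lf :: "nat \<Rightarrow> 'v"
    and w :: "'v set \<Rightarrow> real"
  assumes "n \<ge> 3"
    and "n_leaf_tree n V E lf"
    and "\<forall>e\<in>E. w e \<ge> 0"
  shows "((\<forall>e. internal_edge n E lf e \<longrightarrow> w e = 0) \<longrightarrow>
            core n (tree_game E lf w) = {leaf_weights n E lf w})
       \<and> ((\<exists>e. internal_edge n E lf e \<and> w e > 0) \<longrightarrow>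
            core n (tree_game E lf w) = {})"
proof -
  interpret leaf_tree n V E lf by (rule leaf_tree.intro) (fact assms(2))
  let ?v = "tree_game E lf w" and ?\<alpha> = "leaf_weights n E lf w"
  have bounded: "x i \<le> ?\<alpha> i" if "x \<in> core n ?v" "i \<in> {1..n}" for x i
    using core_le_marginal_contribution[OF that]
      tree_game_marginal_le_leaf_weight[OF assms(3) that(2)] by linarith
  show ?thesis
  proof (intro conjI impI)
    assume "\<forall>e. internal_edge n E lf e \<longrightarrow> w e = 0"
    with assms(1,3) have "?\<alpha> \<in> core n ?v" by (rule leaf_weights_in_core)
    then show "core n ?v = {?\<alpha>}" using bounded by (rule core_eq_singletonI)
  next
    assume "\<exists>e. internal_edge n E lf e \<and> w e > 0"
    then obtain e where e: "internal_edge n E lf e" "w e > 0" by blast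
    have "w e \<le> sum w {e. internal_edge n E lf e}"
      using e(1) assms(3) finite_internal_edges
      by (intro member_le_sum) (auto simp: internal_edge_def)
    then have "sum ?\<alpha> {1..n} < ?v {1..n}"
      using e(2) tree_game_all_leaves[OF assms(1)] by simp
    then show "core n ?v = {}" using bounded by (rule core_empty_if_sum_less)
  qed
qed

end
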